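(* Let $X=\{a_1,\dots,a_\ell\}$ be a finite set of $\ell$ distinct points and $N\ge2$. For every $\gamma\in\mathcal{P}_{sym}(X^N)$ there exists a probability measure $\alpha$ on the finite set $\mathcal{P}_{\frac1N}(X)$ such that $$\gamma=\int_{\mathcal{P}_{\frac1N}(X)}\psi_N(\lambda)\,d\alpha(\lambda),$$ and for every $\mu\in\mathcal{P}_{N\text{-}rep}(X^2)$ there exists a probability measure $\alpha$ on $\mathcal{P}_{\frac1N}(X)$ such that $$\mu=\int_{\mathcal{P}_{\frac1N}(X)}\Big(\lambda\otimes\lambda+\frac1{N-1}\big(\lambda\otimes\lambda-\sum_{i=1}^\ell\lambda_i\delta_i\otimes\delta_i\big)\Big)\,d\alpha(\lambda).$$
   Context: $\mathcal{P}(X)$ denotes probability measures on $X$, identified with vectors $(\lambda_i)$, $\lambda_i=\lambda(\{a_i\})$; $\delta_i$ is the Dirac measure at $a_i$; $\mathcal{P}_{\frac1N}(X)=\{\lambda\in\mathcal{P}(X):\lambda_i\in\frac1N\mathbb{Z}\ \forall i\}$. The symmetrization operator is $(S\gamma)(A_1\times\cdots\times A_N)=\frac1{N!}\sum_{\sigma\in S_N}\gamma(A_{\sigma(1)}\times\cdots\times A_{\sigma(N)})$; $\mathcal{P}_{sym}(X^N)$ is the set of probability measures $\gamma$ on $X^N$ with $S\gamma=\gamma$. A probability measure $\mu$ on $X^2$ is $N$-representable if $\mu(A)=\gamma(A\times X^{N-2})$ for all $A\subseteq X^2$ for some $\gamma\in\mathcal{P}_{sym}(X^N)$; $\mathcal{P}_{N\text{-}rep}(X^2)$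 is the set of these. For $\lambda\in\mathcal{P}_{\frac1N}(X)$, $\psi_N(\lambda)=S(\delta_{a_{i_1}}\otimes\cdots\otimes\delta_{a_{i_N}})$ where $i_1\le\dots\le i_N$ is the nondecreasing index sequence in which each $i$ appears exactly $N\lambda_i$ times (equivalently, $\psi_N(\lambda)$ is the unique extreme point of $\mathcal{P}_{sym}(X^N)$ with one-point marginal $\lambda$). *)

theory Defs
  imports Complex_Main "HOL-Combinatorics.Permutations"
begin

text \<open>Measures on finite sets are identified with their point masses.
  Points of X are the elements of a finite type 'a; the linear order on 'a
  is the enumeration a_1 < ... < a_l. Elements of X^N are lists of length N.\<close>

definition pmeas :: "'b set \<Rightarrow> ('b \<Rightarrow> real) \<Rightarrow> bool" where
  "pmeas A f \<longleftrightarrow> (\<forall>x. 0 \<le> f x) \<and> (\<forall>x. x \<notin> A \<longrightarrow> f x = 0) \<and> sum f A = 1"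

definition tuples :: "nat \<Rightarrow> 'a list set" where
  "tuples N = {xs. length xs = N}"

definition symm :: "nat \<Rightarrow> ('a list \<Rightarrow> real) \<Rightarrow> 'a list \<Rightarrow> real" where
  "symm N \<gamma> xs = (if length xs = N then
     (1 / fact N) * (\<Sum>\<sigma>\<in>{\<sigma>. \<sigma> permutes {..<N}}. \<gamma> (map (\<lambda>i. xs ! \<sigma> i) [0..<N]))
   else 0)"

definition Psym :: "nat \<Rightarrow> ('a list \<Rightarrow> real) set" where
  "Psym N = {\<gamma>. pmeas (tuples N) \<gamma> \<and> symm N \<gamma> = \<gamma>}"

definition Nrep :: "nat \<Rightarrow> ('a \<times> 'a \<Rightarrow> real) set" where
  "Nrep N = {\<mu>. pmeas UNIV \<mu> \<and> (\<exists>\<gamma>\<in>Psym N. \<forall>a b.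
      \<mu> (a, b) = (\<Sum>xs\<in>{xs\<in>tuples N. xs ! 0 = a \<and> xs ! 1 = b}. \<gamma> xs))}"

definition P1N :: "nat \<Rightarrow> ('a::finite \<Rightarrow> real) set" where
  "P1N N = {lam. pmeas UNIV lam \<and> (\<forall>i. real N * lam i \<in> \<int>)}"

definition dirac :: "'b \<Rightarrow> 'b \<Rightarrow> real" where
  "dirac y x = (if x = y then 1 else 0)"

definition seqN :: "nat \<Rightarrow> ('a::{finite,linorder} \<Rightarrow> real) \<Rightarrow> 'a list" where
  "seqN N lam = concat (map (\<lambda>a. replicate (nat (round (real N * lam a))) a)
                             (sorted_list_of_set (UNIV :: 'a set)))"

definition psiN :: "nat \<Rightarrow> ('a::{finite,linorder} \<Rightarrow> real) \<Rightarrow> 'a list \<Rightarrow> real" where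
  "psiN N lam = symm N (dirac (seqN N lam))"

end

theory Submission
  imports Defs "HOL-Combinatorics.Multiset_Permutations"
begin

text \<open>A symmetric measure on X^N is constant on the orbits of S_N, i.e. on the sets of tuples
  with a fixed empirical measure \<lambda>, and psi_N(\<lambda>) is the uniform distribution on the orbit of
  type \<lambda>. Hence \<gamma> is the mixture of the psi_N(\<lambda>) weighted by the \<gamma>-mass of these orbits.
  Passing to two-point marginals, the fraction of rearrangements of a tuple of type \<lambda> that
  start with (a, b) is N\<lambda>_a (N\<lambda>_b - \<delta>_ab) / (N (N - 1)), which is the stated integrand.\<close>

lemma finite_tuples: "finite (tuples N :: 'a::finite list set)"
proof -
  have "tuples N = {xs. set xs \<subseteq> (UNIV :: 'a set) \<and> length xs = N}"
    by (auto simp: tuples_def)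
  thus ?thesis using finite_lists_length_eq[of "UNIV :: 'a set" N] by simp
qed

lemma symm_eq_sum_permute_list:
  "length xs = N \<Longrightarrow>
   symm N f xs = (\<Sum>\<sigma>\<in>{\<sigma>. \<sigma> permutes {..<N}}. f (permute_list \<sigma> xs)) / fact N"
  by (simp add: symm_def permute_list_def)

lemma symm_permute_list:
  assumes "\<tau> permutes {..<N}" "length xs = N"
  shows "symm N f (permute_list \<tau> xs) = symm N f xs"
proof -
  have "(\<Sum>\<sigma>\<in>{\<sigma>. \<sigma> permutes {..<N}}. f (permute_list \<sigma> (permute_list \<tau> xs)))
      = (\<Sum>\<sigma>\<in>{\<sigma>. \<sigma> permutes {..<N}}. f (permute_list (\<tau> \<circ> \<sigma>) xs))"
    by (intro sum.cong refl) (simp add: permute_list_compose assms(2))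
  also have "\<dots> = (\<Sum>\<sigma>\<in>{\<sigma>. \<sigma> permutes {..<N}}. f (permute_list \<sigma> xs))"
    using setum_permutations_compose_left[OF assms(1), of "\<lambda>\<sigma>. f (permute_list \<sigma> xs)"]
    by simp
  finally show ?thesis using assms by (simp add: symm_eq_sum_permute_list)
qed

lemma symm_mset_eq:
  assumes "length xs = N" "mset ys = mset xs"
  shows "symm N f ys = symm N f xs"
proof -
  obtain p where "p permutes {..<length xs}" "permute_list p xs = ys"
    using mset_eq_permutation[OF assms(2)] by blast
  thus ?thesis using symm_permute_list assms(1) by blast
qed

lemma sum_tuples_permute_list:
  assumes "\<sigma> permutes {..<N}"
  shows "(\<Sum>xs\<in>tuples N. f (permute_list \<sigma> xs)) = (\<Sum>xs\<in>tuples N. f xs)"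
proof (rule sum.reindex_bij_witness[of _ "permute_list (inv \<sigma>)" "permute_list \<sigma>"])
  fix xs assume "xs \<in> tuples N"
  hence len: "length xs = N" by (simp add: tuples_def)
  show "permute_list (inv \<sigma>) (permute_list \<sigma> xs) = xs"
    using permute_list_compose[of "inv \<sigma>" xs \<sigma>] permutes_inv[OF assms] len
      permutes_inv_o(1)[OF assms] by simp
  show "permute_list \<sigma> (permute_list (inv \<sigma>) xs) = xs"
    using permute_list_compose[of \<sigma> xs "inv \<sigma>"] assms len permutes_inv_o(2)[OF assms] by simp
  show "permute_list \<sigma> xs \<in> tuples N" "permute_list (inv \<sigma>) xs \<in> tuples N"
    using len by (simp_all add: tuples_def)
qed simp

lemma sum_tuples_symm: "(\<Sum>xs\<in>tuples N. symm N f xs) = (\<Sum>xs\<in>tuples N. f xs)"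
proof -
  let ?S = "{\<sigma>. \<sigma> permutes {..<N}}"
  have "(\<Sum>xs\<in>tuples N. symm N f xs)
      = (\<Sum>xs\<in>tuples N. \<Sum>\<sigma>\<in>?S. f (permute_list \<sigma> xs)) / fact N"
    by (simp add: symm_eq_sum_permute_list tuples_def sum_divide_distrib)
  also have "\<dots> = (\<Sum>\<sigma>\<in>?S. \<Sum>xs\<in>tuples N. f (permute_list \<sigma> xs)) / fact N"
    by (simp add: sum.swap[of _ "tuples N"])
  also have "\<dots> = (\<Sum>\<sigma>\<in>?S. \<Sum>xs\<in>tuples N. f xs) / fact N"
    by (simp add: sum_tuples_permute_list)
  also have "\<dots> = (\<Sum>xs\<in>tuples N. f xs)"
    using card_permutations[of "{..<N}" N] by simp
  finally show ?thesis .
qed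

text \<open>The total mass of the Dirac measure at s is preserved by symmetrisation and spread
  evenly over the rearrangements of s.\<close>

lemma symm_dirac_eq:
  fixes s :: "'a::finite list"
  assumes len: "length s = N"
  shows "symm N (dirac s) xs =
    (if mset xs = mset s then 1 / real (card (permutations_of_multiset (mset s))) else 0)"
proof -
  let ?O = "permutations_of_multiset (mset s)"
  have vanish: "symm N (dirac s) ys = 0" if "mset ys \<noteq> mset s" for ys
  proof (cases "length ys = N")
    case True
    have "dirac s (permute_list \<sigma> ys) = 0" if "\<sigma> permutes {..<N}" for \<sigma>
      using \<open>mset ys \<noteq> mset s\<close> that True by (auto simp: dirac_def)
    thus ?thesis using True by (simp add: symm_eq_sum_permute_list)
  qed (simp add: symm_def)
  have const: "symm N (dirac s) ys = symm N (dirac s) s" if "ys \<in> ?O" for ys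
    using that len by (intro symm_mset_eq) (auto simp: permutations_of_multiset_def)
  have O_tuples: "?O \<subseteq> tuples N"
    using len by (auto simp: permutations_of_multiset_def tuples_def dest: mset_eq_length)
  have "1 = (\<Sum>ys\<in>tuples N. dirac s ys)"
    unfolding dirac_def using len
    by (subst sum.delta) (simp_all add: finite_tuples[unfolded tuples_def] tuples_def)
  also have "\<dots> = (\<Sum>ys\<in>tuples N. symm N (dirac s) ys)" by (simp add: sum_tuples_symm)
  also have "\<dots> = (\<Sum>ys\<in>?O. symm N (dirac s) ys)"
    using O_tuples finite_tuples[of N] vanish
    by (intro sum.mono_neutral_right) (auto simp: permutations_of_multiset_def)
  also have "\<dots> = real (card ?O) * symm N (dirac s) s" by (simp add: const)
  finally have "symm N (dirac s) s = 1 / real (card ?O)"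
    by (simp add: field_simps)
  thus ?thesis
    using vanish const[of xs] by (simp add: permutations_of_multiset_def)
qed

lemma count_seqN: "count (mset (seqN N lam)) a = nat (round (real N * lam a))"
proof -
  have count_concat: "count (mset (concat (map g L))) a = (\<Sum>x\<leftarrow>L. count (mset (g x)) a)"
    for g :: "'a \<Rightarrow> 'a list" and L
    by (induction L) simp_all
  have "count (mset (seqN N lam)) a
      = (\<Sum>x\<leftarrow>sorted_list_of_set UNIV. count (mset (replicate (nat (round (real N * lam x))) x)) a)"
    unfolding seqN_def by (rule count_concat)
  also have "\<dots> = (\<Sum>x\<in>UNIV. if x = a then nat (round (real N * lam a)) else 0)"
    by (simp add: sum_list_distinct_conv_sum_set)
  finally show ?thesis by simp
qed

lemma real_count_seqN:
  assumes "lam \<in> P1N N"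
  shows "real (count (mset (seqN N lam)) a) = real N * lam a"
proof -
  obtain k where k: "real N * lam a = of_int k"
    using assms unfolding P1N_def by (auto elim!: Ints_cases)
  have "lam a \<ge> 0" using assms by (auto simp: P1N_def pmeas_def)
  hence "k \<ge> 0" using k by (metis of_int_0_le_iff of_nat_0_le_iff zero_le_mult_iff)
  thus ?thesis using k by (simp add: count_seqN)
qed

lemma sum_count_UNIV: "(\<Sum>a\<in>UNIV. count M (a::'a::finite)) = size M"
proof -
  have "(\<Sum>a\<in>UNIV. count M a) = (\<Sum>a\<in>set_mset M. count M a)"
    by (rule sum.mono_neutral_right) (auto simp: not_in_iff)
  thus ?thesis by (simp add: size_multiset_overloaded_eq)
qed

lemma length_seqN:
  assumes "lam \<in> P1N N"
  shows "length (seqN N lam) = N"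
proof -
  have "real (length (seqN N lam)) = (\<Sum>a\<in>UNIV. real (count (mset (seqN N lam)) a))"
    by (simp add: sum_count_UNIV flip: of_nat_sum)
  also have "\<dots> = real N * sum lam UNIV"
    by (simp add: real_count_seqN[OF assms] sum_distrib_left)
  also have "\<dots> = real N" using assms by (simp add: P1N_def pmeas_def)
  finally show ?thesis by simp
qed

definition empirical :: "nat \<Rightarrow> 'a list \<Rightarrow> 'a \<Rightarrow> real" where
  "empirical N xs a = real (count (mset xs) a) / real N"

lemma empirical_in_P1N:
  assumes "length xs = N" "N > 0"
  shows "empirical N (xs :: 'a::finite list) \<in> P1N N"
proof -
  have "(\<Sum>a\<in>UNIV. real (count (mset xs) a)) = real N"
    using assms sum_count_UNIV[of "mset xs"] by (simp flip: of_nat_sum)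
  hence "(\<Sum>a\<in>UNIV. empirical N xs a) = 1"
    using assms unfolding empirical_def by (simp flip: sum_divide_distrib)
  thus ?thesis using assms by (auto simp: P1N_def pmeas_def empirical_def)
qed

lemma mset_seqN_eq_iff:
  assumes "lam \<in> P1N N" "N > 0"
  shows "mset (seqN N lam) = mset xs \<longleftrightarrow> empirical N xs = lam"
proof -
  have "mset (seqN N lam) = mset xs \<longleftrightarrow> (\<forall>a. real N * lam a = real (count (mset xs) a))"
    by (simp add: multiset_eq_iff real_count_seqN[OF assms(1), symmetric])
  also have "\<dots> \<longleftrightarrow> empirical N xs = lam"
    using assms(2) by (auto simp: empirical_def fun_eq_iff field_simps)
  finally show ?thesis .
qed

lemma empirical_eq_iff: "N > 0 \<Longrightarrow> empirical N xs = empirical N ys \<longleftrightarrow> mset xs = mset ys"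
  by (auto simp: empirical_def fun_eq_iff multiset_eq_iff)

lemma P1N_eq_image_empirical:
  assumes "N > 0"
  shows "P1N N = empirical N ` (tuples N :: 'a::{finite,linorder} list set)"
proof
  show "empirical N ` (tuples N :: 'a list set) \<subseteq> P1N N"
    using empirical_in_P1N assms by (auto simp: tuples_def)
  show "P1N N \<subseteq> empirical N ` (tuples N :: 'a list set)"
  proof
    fix lam :: "'a \<Rightarrow> real" assume lam: "lam \<in> P1N N"
    hence "lam = empirical N (seqN N lam)" and "seqN N lam \<in> tuples N"
      using mset_seqN_eq_iff[OF lam assms, of "seqN N lam"] length_seqN[OF lam]
      by (auto simp: tuples_def)
    thus "lam \<in> empirical N ` (tuples N :: 'a list set)" by blast
  qed
qed

lemma finite_P1N: "N > 0 \<Longrightarrow> finite (P1N N :: ('a::{finite,linorder} \<Rightarrow> real) set)"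
  by (simp add: P1N_eq_image_empirical finite_tuples)

lemma psiN_eq:
  assumes "lam \<in> P1N N"
  shows "psiN N lam xs = (if mset xs = mset (seqN N lam)
    then 1 / real (card (permutations_of_multiset (mset (seqN N lam)))) else 0)"
  unfolding psiN_def by (rule symm_dirac_eq[OF length_seqN[OF assms]])

lemma Psym_mset_eq:
  assumes "\<gamma> \<in> Psym N" "length xs = N" "mset ys = mset xs"
  shows "\<gamma> ys = \<gamma> xs"
  using symm_mset_eq[OF assms(2,3), of \<gamma>] assms(1) by (simp add: Psym_def)

definition mixing_weight :: "nat \<Rightarrow> ('a list \<Rightarrow> real) \<Rightarrow> ('a \<Rightarrow> real) \<Rightarrow> real" where
  "mixing_weight N \<gamma> lam = (\<Sum>xs\<in>{xs\<in>tuples N. empirical N xs = lam}. \<gamma> xs)"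

lemma pmeas_mixing_weight:
  fixes \<gamma> :: "'a::{finite,linorder} list \<Rightarrow> real"
  assumes "N > 0" "pmeas (tuples N) \<gamma>"
  shows "pmeas (P1N N) (mixing_weight N \<gamma>)"
  unfolding pmeas_def
proof (intro conjI allI impI)
  show "0 \<le> mixing_weight N \<gamma> lam" for lam
    using assms(2) unfolding mixing_weight_def pmeas_def by (simp add: sum_nonneg)
  show "mixing_weight N \<gamma> lam = 0" if "lam \<notin> P1N N" for lam
  proof -
    have no_tuples: "{xs\<in>tuples N. empirical N xs = lam} = {}"
      using that P1N_eq_image_empirical[OF assms(1)] by blast
    show ?thesis unfolding mixing_weight_def no_tuples by simp
  qed
  show "sum (mixing_weight N \<gamma>) (P1N N) = 1"
    using sum.group[OF finite_tuples finite_P1N[OF assms(1)]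
        equalityD2[OF P1N_eq_image_empirical[OF assms(1)]], of \<gamma>] assms(2)
    by (simp add: mixing_weight_def pmeas_def)
qed

lemma Psym_eq_mixture:
  fixes \<gamma> :: "'a::{finite,linorder} list \<Rightarrow> real"
  assumes N: "N > 0" and \<gamma>: "\<gamma> \<in> Psym N"
  shows "\<gamma> xs = (\<Sum>lam\<in>P1N N. mixing_weight N \<gamma> lam * psiN N lam xs)"
proof (cases "length xs = N")
  case False
  hence "\<gamma> xs = 0" using \<gamma> by (simp add: Psym_def pmeas_def tuples_def)
  moreover have "psiN N lam xs = 0" for lam using False by (simp add: psiN_def symm_def)
  ultimately show ?thesis by simp
next
  case True
  let ?O = "permutations_of_multiset (mset xs)"
  have emp: "empirical N xs \<in> P1N N" using True N by (rule empirical_in_P1N)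
  have psi: "psiN N lam xs = (if lam = empirical N xs then 1 / real (card ?O) else 0)"
    if "lam \<in> P1N N" for lam
    using psiN_eq[OF that, of xs] mset_seqN_eq_iff[OF that N, of xs] by (auto simp: eq_commute)
  have "{ys\<in>tuples N. empirical N ys = empirical N xs} = ?O"
    using True
    by (auto simp: empirical_eq_iff[OF N] tuples_def permutations_of_multiset_def dest: mset_eq_length)
  hence "mixing_weight N \<gamma> (empirical N xs) = (\<Sum>ys\<in>?O. \<gamma> ys)"
    unfolding mixing_weight_def by (rule arg_cong)
  also have "\<dots> = (\<Sum>ys\<in>?O. \<gamma> xs)"
    by (intro sum.cong refl Psym_mset_eq[OF \<gamma> True]) (simp add: permutations_of_multiset_def)
  also have "\<dots> = real (card ?O) * \<gamma> xs" by simp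
  finally have weight: "mixing_weight N \<gamma> (empirical N xs) = real (card ?O) * \<gamma> xs" .
  have "(\<Sum>lam\<in>P1N N. mixing_weight N \<gamma> lam * psiN N lam xs)
      = (\<Sum>lam\<in>P1N N. if lam = empirical N xs
           then mixing_weight N \<gamma> (empirical N xs) / real (card ?O) else 0)"
    by (intro sum.cong refl) (simp add: psi)
  also have "\<dots> = \<gamma> xs"
    using emp finite_P1N[OF N] weight card_gt_0_iff[of ?O] by (subst sum.delta) auto
  finally have "(\<Sum>lam\<in>P1N N. mixing_weight N \<gamma> lam * psiN N lam xs) = \<gamma> xs" .
  thus ?thesis by simp
qed


lemma card_permutations_of_multiset_hd:
  assumes "M \<noteq> {#}"
  shows "card {xs\<in>permutations_of_multiset M. hd xs = a} * size M
       = count M a * card (permutations_of_multiset M)"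
proof (cases "a \<in># M")
  case True
  have "{xs\<in>permutations_of_multiset M. hd xs = a} = (#) a ` permutations_of_multiset (M - {#a#})"
    using permutations_of_multiset_nonempty[OF assms] True
    by (auto simp: permutations_of_multiset_Cons_iff)
  hence "card {xs\<in>permutations_of_multiset M. hd xs = a} = card (permutations_of_multiset (M - {#a#}))"
    by (simp add: card_image)
  thus ?thesis using card_permutations_of_multiset_remove_aux[OF True] by (simp add: mult.commute)
next
  case False
  have "{xs\<in>permutations_of_multiset M. hd xs = a} = {}"
    using False assms by (auto simp: permutations_of_multiset_def hd_in_set)
  thus ?thesis using False by (simp add: not_in_iff)
qed

lemma card_permutations_of_multiset_prefix2:
  assumes "size M \<ge> 2"
  shows "card {xs\<in>permutations_of_multiset M. xs ! 0 = a \<and> xs ! 1 = b} * (size M * (size M - 1))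
       = count M a * count (M - {#a#}) b * card (permutations_of_multiset M)"
proof (cases "a \<in># M")
  case True
  let ?M' = "M - {#a#}"
  have size': "size ?M' = size M - 1" using True by (simp add: size_Diff_singleton)
  hence M'_ne: "?M' \<noteq> {#}" using assms by auto
  have "{xs\<in>permutations_of_multiset M. xs ! 0 = a \<and> xs ! 1 = b}
      = (#) a ` {ys\<in>permutations_of_multiset ?M'. hd ys = b}"
  proof (intro equalityI subsetI)
    fix xs assume xs: "xs \<in> {xs\<in>permutations_of_multiset M. xs ! 0 = a \<and> xs ! 1 = b}"
    hence "length xs \<ge> 2" using assms by (auto simp: permutations_of_multiset_def)
    then obtain u v ys where "xs = u # v # ys"
      by (metis One_nat_def Suc_1 Suc_le_length_iff)
    thus "xs \<in> (#) a ` {ys\<in>permutations_of_multiset ?M'. hd ys = b}"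
      using xs by (auto simp: permutations_of_multiset_Cons_iff)
  next
    fix xs assume "xs \<in> (#) a ` {ys\<in>permutations_of_multiset ?M'. hd ys = b}"
    then obtain ys where "xs = a # ys" "ys \<in> permutations_of_multiset ?M'" "hd ys = b" by blast
    moreover have "ys \<noteq> []" using calculation(2) M'_ne by (auto simp: permutations_of_multiset_def)
    ultimately show "xs \<in> {xs\<in>permutations_of_multiset M. xs ! 0 = a \<and> xs ! 1 = b}"
      using True by (auto simp: permutations_of_multiset_Cons_iff hd_conv_nth)
  qed
  hence "card {xs\<in>permutations_of_multiset M. xs ! 0 = a \<and> xs ! 1 = b}
      = card {ys\<in>permutations_of_multiset ?M'. hd ys = b}"
    by (simp add: card_image)
  moreover note card_permutations_of_multiset_hd[OF M'_ne, of b]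
    card_permutations_of_multiset_remove_aux[OF True]
  ultimately show ?thesis
    unfolding size' by (metis (no_types, lifting) mult.assoc mult.commute mult.left_commute)
next
  case False
  have "{xs\<in>permutations_of_multiset M. xs ! 0 = a \<and> xs ! 1 = b} = {}"
    using False assms by (auto simp: permutations_of_multiset_def) (metis nth_mem pos2 order_less_le_trans)
  thus ?thesis using False by (simp add: not_in_iff)
qed

lemma count_mult_count_diff_singleton:
  "real (count M a) * real (count (M - {#a#}) b)
   = real (count M a) * (real (count M b) - (if a = b then 1 else 0))"
  by (cases "a \<in># M") (auto simp: not_in_iff of_nat_diff Suc_le_eq)

lemma marginal_psiN:
  assumes lam: "lam \<in> P1N N" and N: "N \<ge> 2"
  shows "(\<Sum>xs\<in>{xs\<in>tuples N. xs ! 0 = a \<and> xs ! 1 = b}. psiN N lam xs)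
       = lam a * lam b + 1 / (real N - 1) * (lam a * lam b - (if a = b then lam a else 0))"
proof -
  let ?M = "mset (seqN N lam)"
  let ?O = "permutations_of_multiset ?M"
  let ?K = "{xs\<in>?O. xs ! 0 = a \<and> xs ! 1 = b}"
  have size: "size ?M = N" using length_seqN[OF lam] by simp
  let ?S = "{xs\<in>tuples N. xs ! 0 = a \<and> xs ! 1 = b}"
  have K_eq: "{xs\<in>?S. mset xs = ?M} = ?K"
    using size by (auto simp: tuples_def permutations_of_multiset_def dest: mset_eq_length)
  have "(\<Sum>xs\<in>?S. psiN N lam xs) = (\<Sum>xs\<in>?S. if mset xs = ?M then 1 / real (card ?O) else 0)"
    by (simp add: psiN_eq[OF lam])
  also have "\<dots> = (\<Sum>xs\<in>{xs\<in>?S. mset xs = ?M}. 1 / real (card ?O))"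
    using finite_tuples[of N] by (intro sum.inter_filter[symmetric]) auto
  also have "\<dots> = real (card ?K) / real (card ?O)" unfolding K_eq by simp
  also have "\<dots> = real (count ?M a) * (real (count ?M b) - (if a = b then 1 else 0))
                    / (real N * (real N - 1))"
  proof -
    have "real (card ?K) * (real N * (real N - 1))
        = real (count ?M a) * real (count (?M - {#a#}) b) * real (card ?O)"
    proof -
      have "real (N - 1) = real N - 1" using N by simp
      thus ?thesis
        using arg_cong[OF card_permutations_of_multiset_prefix2[of ?M a b, unfolded size, OF N], of real]
        by (simp only: of_nat_mult)
    qed
    moreover have "card ?O > 0" by (simp add: card_gt_0_iff)
    ultimately show ?thesis
      using N count_mult_count_diff_singleton[of ?M a b] by (simp add: field_simps)
  qed
  also have "\<dots> = lam a * lam b + 1 / (real N - 1) * (lam a * lam b - (if a = b then lam a else 0))"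
    using real_count_seqN[OF lam, of a] real_count_seqN[OF lam, of b] N
    by (simp add: field_simps)
  finally show ?thesis .
qed


theorem lemma4p1:
  fixes N :: nat
  assumes "N \<ge> 2"
  shows "(\<forall>\<gamma> :: ('a::{finite,linorder}) list \<Rightarrow> real. \<gamma> \<in> Psym N \<longrightarrow>
            (\<exists>\<alpha>. pmeas (P1N N) \<alpha> \<and>
               (\<forall>xs. \<gamma> xs = (\<Sum>lam\<in>P1N N. \<alpha> lam * psiN N lam xs))))
       \<and> (\<forall>\<mu> :: 'a \<times> 'a \<Rightarrow> real. \<mu> \<in> Nrep N \<longrightarrow>
            (\<exists>\<alpha>. pmeas (P1N N) \<alpha> \<and>
               (\<forall>a b. \<mu> (a, b) = (\<Sum>lam\<in>P1N N. \<alpha> lam *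
                  (lam a * lam b + (1 / (real N - 1)) *
                     (lam a * lam b - (if a = b then lam a else 0)))))))"
proof -
  have N: "N > 0" using assms by simp
  have weight: "pmeas (P1N N) (mixing_weight N \<gamma>)" if "\<gamma> \<in> Psym N" for \<gamma> :: "'a list \<Rightarrow> real"
    using pmeas_mixing_weight[OF N, of \<gamma>] that unfolding Psym_def by blast
  show ?thesis
  proof (intro conjI allI impI)
    fix \<gamma> :: "'a list \<Rightarrow> real" assume "\<gamma> \<in> Psym N"
    thus "\<exists>\<alpha>. pmeas (P1N N) \<alpha> \<and> (\<forall>xs. \<gamma> xs = (\<Sum>lam\<in>P1N N. \<alpha> lam * psiN N lam xs))"
      using weight Psym_eq_mixture[OF N] by blast
  next
    fix \<mu> :: "'a \<times> 'a \<Rightarrow> real" assume "\<mu> \<in> Nrep N"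
    then obtain \<gamma> where \<gamma>: "\<gamma> \<in> Psym N"
      and \<mu>: "\<And>a b. \<mu> (a, b) = (\<Sum>xs\<in>{xs\<in>tuples N. xs ! 0 = a \<and> xs ! 1 = b}. \<gamma> xs)"
      by (auto simp: Nrep_def)
    let ?S = "\<lambda>a b. {xs\<in>tuples N. xs ! 0 = a \<and> xs ! 1 = b}"
    have "\<mu> (a, b) = (\<Sum>lam\<in>P1N N. mixing_weight N \<gamma> lam *
            (lam a * lam b + (1 / (real N - 1)) * (lam a * lam b - (if a = b then lam a else 0))))"
      for a b
    proof -
      have "\<mu> (a, b) = (\<Sum>xs\<in>?S a b. \<Sum>lam\<in>P1N N. mixing_weight N \<gamma> lam * psiN N lam xs)"
        unfolding \<mu> by (rule sum.cong[OF refl Psym_eq_mixture[OF N \<gamma>]])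
      also have "\<dots> = (\<Sum>lam\<in>P1N N. mixing_weight N \<gamma> lam * (\<Sum>xs\<in>?S a b. psiN N lam xs))"
        by (simp add: sum.swap[of _ "P1N N"] sum_distrib_left)
      also have "\<dots> = (\<Sum>lam\<in>P1N N. mixing_weight N \<gamma> lam *
            (lam a * lam b + (1 / (real N - 1)) * (lam a * lam b - (if a = b then lam a else 0))))"
        by (intro sum.cong refl) (simp only: marginal_psiN[OF _ assms])
      finally show ?thesis .
    qed
    thus "\<exists>\<alpha>. pmeas (P1N N) \<alpha> \<and> (\<forall>a b. \<mu> (a, b) = (\<Sum>lam\<in>P1N N. \<alpha> lam *
            (lam a * lam b + (1 / (real N - 1)) * (lam a * lam b - (if a = b then lam a else 0)))))"
      using weight[OF \<gamma>] by blast
  qed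
qed

end
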